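(* Let $p\le q$ be positive integers, $f=x^p+y^q\in\mathbb C[x,y]$ and $\ell\in\mathbb N$. Then for every $\omega=(\omega_1,\omega_2)\in\mathbb R^2\setminus\{0\}$, $$b_{\mathrm{Ann}(f^\ell),\omega}(s)=\begin{cases}s-p\ell\omega_1&\text{if }p\omega_1\le q\omega_2,\\ s-q\ell\omega_2&\text{otherwise.}\end{cases}$$
   Context: $D_2$ is the second Weyl algebra in $x,y,\partial_x,\partial_y$; ideals are left ideals. For $\omega\in\mathbb R^2$, the $(-\omega,\omega)$-weight of $x^{a}y^{b}\partial_x^{c}\partial_y^{e}$ is $-\omega_1a-\omega_2b+\omega_1c+\omega_2e$; $\mathrm{in}_{(-\omega,\omega)}(I)$ is the left ideal generated by the maximal-weight parts of the (normally ordered) elements of $I$. For a holonomic ideal $I$ and $\omega\neq0$, with $s=\omega_1x\partial_x+\omega_2y\partial_y$, the b-function $b_{I,\omega}(s)$ is the monic generator of $\mathrm{in}_{(-\omega,\omega)}(I)\cap\mathbb C[s]$ (standing assumption: $\mathrm{in}_{(-\omega,\omega)}(I)\neq D_2$). $\mathrm{Ann}(f^\ell)=\{P\in D_2:P\bullet f^\ell=0\}$ with $x\bullet g=xg$, $\partial_x\bullet g=\partial g/\partial x$, etc. $\mathbb N=\{0,1,2,\dots\}$. *)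

theory Defs
  imports Complex_Main "HOL-Library.Poly_Mapping" "HOL-Library.Product_Plus"
    "HOL-Computational_Algebra.Polynomial"
begin

text \<open>A polynomial in C[x,y] is a finitely supported map from exponent pairs (i,j)
  (standing for x^i y^j) to coefficients; multiplication is the convolution product.\<close>
type_synonym cpoly2 = "(nat \<times> nat) \<Rightarrow>\<^sub>0 complex"

text \<open>Normally ordered monomial x^a y^b dx^c dy^e.\<close>
datatype wmon = WM nat nat nat nat

type_synonym weyl2 = "wmon \<Rightarrow>\<^sub>0 complex"

definition ffact_c :: "nat \<Rightarrow> nat \<Rightarrow> complex" where
  "ffact_c a k = of_nat (fact a) / of_nat (fact (a - k))"

text \<open>Product in D_2, from the normal-ordering rule
  dx^c x^a = sum_k (c choose k) a!/(a-k)! x^(a-k) dx^(c-k) (and likewise for y).\<close>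
fun wmon_mult :: "complex \<Rightarrow> wmon \<Rightarrow> complex \<Rightarrow> wmon \<Rightarrow> weyl2" where
  "wmon_mult u (WM a1 b1 c1 e1) v (WM a2 b2 c2 e2) =
     (\<Sum>k1\<in>{..min c1 a2}. \<Sum>k2\<in>{..min e1 b2}.
        Poly_Mapping.single (WM (a1 + a2 - k1) (b1 + b2 - k2) (c1 + c2 - k1) (e1 + e2 - k2))
          (u * v * of_nat (c1 choose k1) * ffact_c a2 k1 * of_nat (e1 choose k2) * ffact_c b2 k2))"

definition wmult :: "weyl2 \<Rightarrow> weyl2 \<Rightarrow> weyl2" (infixl "\<star>" 70) where
  "P \<star> Q = (\<Sum>m1\<in>Poly_Mapping.keys P. \<Sum>m2\<in>Poly_Mapping.keys Q. wmon_mult (Poly_Mapping.lookup P m1) m1 (Poly_Mapping.lookup Q m2) m2)"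

definition wone :: weyl2 where
  "wone = Poly_Mapping.single (WM 0 0 0 0) 1"

fun wpow :: "weyl2 \<Rightarrow> nat \<Rightarrow> weyl2" where
  "wpow P 0 = wone"
| "wpow P (Suc n) = P \<star> wpow P n"

text \<open>Action of D_2 on C[x,y]: x acts by multiplication, dx by d/dx, etc.\<close>
fun wmon_act :: "wmon \<Rightarrow> nat \<times> nat \<Rightarrow> complex \<Rightarrow> cpoly2" where
  "wmon_act (WM a b c e) (i, j) u =
     (if c \<le> i \<and> e \<le> j
      then Poly_Mapping.single (i - c + a, j - e + b) (u * ffact_c i c * ffact_c j e)
      else 0)"

definition wact :: "weyl2 \<Rightarrow> cpoly2 \<Rightarrow> cpoly2" where
  "wact P g = (\<Sum>m\<in>Poly_Mapping.keys P. \<Sum>ij\<in>Poly_Mapping.keys g. wmon_act m ij (Poly_Mapping.lookup P m * Poly_Mapping.lookup g ij))"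

definition Ann :: "cpoly2 \<Rightarrow> weyl2 set" where
  "Ann g = {P. wact P g = 0}"

inductive_set left_ideal_gen :: "weyl2 set \<Rightarrow> weyl2 set" for G where
  zero: "0 \<in> left_ideal_gen G"
| gen: "g \<in> G \<Longrightarrow> Q \<star> g \<in> left_ideal_gen G"
| add: "P \<in> left_ideal_gen G \<Longrightarrow> R \<in> left_ideal_gen G \<Longrightarrow> P + R \<in> left_ideal_gen G"

fun wweight :: "real \<times> real \<Rightarrow> wmon \<Rightarrow> real" where
  "wweight (w1, w2) (WM a b c e) = - w1 * a - w2 * b + w1 * c + w2 * e"

definition init_form :: "real \<times> real \<Rightarrow> weyl2 \<Rightarrow> weyl2" where
  "init_form w P =
     (\<Sum>m\<in>{m\<in>Poly_Mapping.keys P. wweight w m = Max (wweight w ` Poly_Mapping.keys P)}.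
        Poly_Mapping.single m (Poly_Mapping.lookup P m))"

definition init_ideal :: "real \<times> real \<Rightarrow> weyl2 set \<Rightarrow> weyl2 set" where
  "init_ideal w I = left_ideal_gen (init_form w ` I)"

text \<open>s = w1 x dx + w2 y dy\<close>
fun s_op :: "real \<times> real \<Rightarrow> weyl2" where
  "s_op (w1, w2) = Poly_Mapping.single (WM 1 0 1 0) (complex_of_real w1)
                 + Poly_Mapping.single (WM 0 1 0 1) (complex_of_real w2)"

definition eval_s :: "real \<times> real \<Rightarrow> complex poly \<Rightarrow> weyl2" where
  "eval_s w b = (\<Sum>i\<le>degree b. Poly_Mapping.single (WM 0 0 0 0) (coeff b i) \<star> wpow (s_op w) i)"

text \<open>b is the b-function of I w.r.t. w: the monic generator of in(I) \<inter> C[s].\<close>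
definition is_b_function :: "weyl2 set \<Rightarrow> real \<times> real \<Rightarrow> complex poly \<Rightarrow> bool" where
  "is_b_function I w b \<longleftrightarrow>
     lead_coeff b = 1 \<and> {c. eval_s w c \<in> init_ideal w I} = {c. b dvd c}"

definition f_pq :: "nat \<Rightarrow> nat \<Rightarrow> cpoly2" where
  "f_pq p q = Poly_Mapping.single (p, 0) 1 + Poly_Mapping.single (0, q) 1"

end

theory Submission
  imports Defs
begin

text \<open>
  Weight the monomial x^i y^j by w1 i + w2 j. Then s acts on it as multiplication by this
  weighted degree, and an operator of (-w,w)-weight W lowers weighted degrees by W. Hence the
  initial form of an annihilator of g annihilates the lowest-degree part of g, and every b(s)
  in the initial ideal of Ann(f^l) vanishes at the minimal weighted degree of a monomial of f^l,
  which is p l w1 (attained at x^(p l)) when p w1 \<le> q w2. Conversely, s - p l w1 is itself an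
  initial form: on f^l it agrees with an operator y^q R(x, \<partial>x) of strictly smaller weight, so
  their difference lies in Ann(f^l). The case p w1 > q w2 follows by exchanging x and y.
\<close>

section \<open>Falling factorials\<close>

definition falling_fact :: "nat \<Rightarrow> nat \<Rightarrow> nat" where
  "falling_fact a k = (a choose k) * fact k"

lemma falling_fact_eq_0_iff: "falling_fact a k = 0 \<longleftrightarrow> a < k"
  by (auto simp: falling_fact_def)

lemma falling_fact_eq_0 [simp]: "a < k \<Longrightarrow> falling_fact a k = 0"
  by (simp add: falling_fact_eq_0_iff)

lemma falling_fact_self_neq_0 [simp]: "falling_fact a a \<noteq> 0"
  by (simp add: falling_fact_eq_0_iff)

lemma falling_fact_0 [simp]: "falling_fact a 0 = 1"
  by (simp add: falling_fact_def)

lemma falling_fact_Suc: "falling_fact a (Suc k) = falling_fact a k * (a - k)"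
proof -
  have absorb: "Suc k * (a choose Suc k) = (a - k) * (a choose k)"
    using binomial_absorption[of k a] binomial_absorb_comp[of a k] by simp
  have "falling_fact a (Suc k) = (Suc k * (a choose Suc k)) * fact k"
    unfolding falling_fact_def by (simp only: fact_Suc of_nat_id mult_ac)
  also have "\<dots> = falling_fact a k * (a - k)"
    unfolding absorb falling_fact_def by (simp only: mult_ac)
  finally show ?thesis .
qed

lemma falling_fact_1 [simp]: "falling_fact a (Suc 0) = a"
  by (simp add: falling_fact_Suc)

lemma falling_fact_add: "falling_fact a (k + t) = falling_fact a k * falling_fact (a - k) t"
  by (induction t) (auto simp: falling_fact_Suc algebra_simps)

lemma falling_fact_vandermonde:
  "(\<Sum>k\<le>r. (r choose k) * falling_fact m k * falling_fact n (r - k)) = falling_fact (m + n) r"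
proof -
  have "(\<Sum>k\<le>r. (r choose k) * falling_fact m k * falling_fact n (r - k))
      = (\<Sum>k\<le>r. fact r * ((m choose k) * (n choose (r - k))))"
  proof (rule sum.cong [OF refl])
    fix k assume "k \<in> {..r}"
    then have "fact k * fact (r - k) * (r choose k) = (fact r :: nat)"
      by (intro binomial_fact_lemma) auto
    then show "(r choose k) * falling_fact m k * falling_fact n (r - k) = fact r * ((m choose k) * (n choose (r - k)))"
      unfolding falling_fact_def by (metis mult.commute mult.left_commute)
  qed
  also have "\<dots> = fact r * ((m + n) choose r)"
    by (simp add: sum_distrib_left [symmetric] vandermonde)
  finally show ?thesis
    by (simp add: falling_fact_def mult.commute)
qed

lemma ffact_c_eq_falling_fact:
  assumes "k \<le> a"
  shows "ffact_c a k = of_nat (falling_fact a k)"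
proof -
  have "fact k * fact (a - k) * (a choose k) = (fact a :: nat)"
    using assms by (rule binomial_fact_lemma)
  then have "(of_nat (fact a) :: complex) = of_nat (falling_fact a k) * of_nat (fact (a - k))"
    unfolding falling_fact_def by (metis mult.commute mult.left_commute of_nat_mult)
  then show ?thesis
    unfolding ffact_c_def by simp
qed

section \<open>The action of D_2 on C[x,y]\<close>

lemma wmon_act_eq [simp]:
  "wmon_act (WM a b c e) (i, j) u =
     Poly_Mapping.single (i - c + a, j - e + b) (u * of_nat (falling_fact i c) * of_nat (falling_fact j e))"
  by (auto simp: ffact_c_eq_falling_fact falling_fact_def binomial_eq_0)

declare wmon_act.simps [simp del]

lemma wmon_act_zero [simp]: "wmon_act m ij 0 = 0"
  by (cases m; cases ij) simp

lemma wmon_act_add: "wmon_act m ij (u + v) = wmon_act m ij u + wmon_act m ij v"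
  by (cases m; cases ij) (simp add: single_add algebra_simps)

lemma poly_mapping_sum_single:
  "(g :: 'a \<Rightarrow>\<^sub>0 'b::comm_monoid_add) = (\<Sum>x\<in>Poly_Mapping.keys g. Poly_Mapping.single x (Poly_Mapping.lookup g x))"
  by (rule poly_mapping_eqI)
    (simp add: lookup_sum lookup_single when_def in_keys_iff sum.delta' split: if_splits)

lemma sum_single: "(\<Sum>x\<in>S. Poly_Mapping.single t (h x)) = Poly_Mapping.single t (\<Sum>x\<in>S. h x)"
  by (induction S rule: infinite_finite_induct) (auto simp: single_add)

lemma wact_eq_sum_over_supersets:
  assumes "finite A" "Poly_Mapping.keys P \<subseteq> A" "finite B" "Poly_Mapping.keys g \<subseteq> B"
  shows "wact P g = (\<Sum>m\<in>A. \<Sum>ij\<in>B. wmon_act m ij (Poly_Mapping.lookup P m * Poly_Mapping.lookup g ij))"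
  unfolding wact_def using assms
  by (intro sum.mono_neutral_cong_left ballI sum.mono_neutral_left) (auto simp: in_keys_iff)

lemma wact_add_left: "wact (P + Q) g = wact P g + wact Q g"
proof -
  let ?A = "Poly_Mapping.keys P \<union> Poly_Mapping.keys Q"
  have expand: "wact X g = (\<Sum>m\<in>?A. \<Sum>ij\<in>Poly_Mapping.keys g.
      wmon_act m ij (Poly_Mapping.lookup X m * Poly_Mapping.lookup g ij))"
    if "Poly_Mapping.keys X \<subseteq> ?A" for X
    using that by (intro wact_eq_sum_over_supersets) auto
  have "Poly_Mapping.keys (P + Q) \<subseteq> ?A"
    by (rule keys_add)
  then show ?thesis
    by (simp add: expand lookup_add distrib_right wmon_act_add sum.distrib)
qed

lemma wact_add_right: "wact P (g + h) = wact P g + wact P h"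
proof -
  let ?B = "Poly_Mapping.keys g \<union> Poly_Mapping.keys h"
  have expand: "wact P k = (\<Sum>m\<in>Poly_Mapping.keys P. \<Sum>ij\<in>?B.
      wmon_act m ij (Poly_Mapping.lookup P m * Poly_Mapping.lookup k ij))"
    if "Poly_Mapping.keys k \<subseteq> ?B" for k
    using that by (intro wact_eq_sum_over_supersets) auto
  have "Poly_Mapping.keys (g + h) \<subseteq> ?B"
    by (rule keys_add)
  then show ?thesis
    by (simp add: expand lookup_add distrib_left wmon_act_add sum.distrib)
qed

lemma wact_zero_left [simp]: "wact 0 g = 0"
  by (simp add: wact_def)

lemma wact_zero_right [simp]: "wact P 0 = 0"
  by (simp add: wact_def)

lemma wact_sum_left: "wact (\<Sum>x\<in>S. F x) g = (\<Sum>x\<in>S. wact (F x) g)"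
  by (induction S rule: infinite_finite_induct) (auto simp: wact_add_left)

lemma wact_sum_right: "wact P (\<Sum>x\<in>S. F x) = (\<Sum>x\<in>S. wact P (F x))"
  by (induction S rule: infinite_finite_induct) (auto simp: wact_add_right)

lemma wact_diff_left: "wact (P - Q) g = wact P g - wact Q g"
  using wact_add_left[of "P - Q" Q g] by (simp add: eq_diff_eq)

lemma wact_single: "wact (Poly_Mapping.single m u) (Poly_Mapping.single ij v) = wmon_act m ij (u * v)"
  by (subst wact_eq_sum_over_supersets[of "{m}" _ "{ij}"]) auto

text \<open>Both sides are the coefficient of \<partial>x^c1 x^a2 \<partial>x^c2 applied to x^i: on the left after
  normal ordering as in wmon_mult, on the right by direct computation.\<close>

lemma falling_fact_compose:
  "(\<Sum>k\<le>min c1 a2. (c1 choose k) * falling_fact a2 k * falling_fact i (c1 + c2 - k))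
     = falling_fact i c2 * falling_fact (i - c2 + a2) c1"
proof -
  have "(\<Sum>k\<le>min c1 a2. (c1 choose k) * falling_fact a2 k * falling_fact i (c1 + c2 - k))
      = (\<Sum>k\<le>c1. (c1 choose k) * falling_fact a2 k * falling_fact i (c1 + c2 - k))"
    by (rule sum.mono_neutral_left) auto
  also have "\<dots> = (\<Sum>k\<le>c1. falling_fact i c2 *
      ((c1 choose k) * falling_fact a2 k * falling_fact (i - c2) (c1 - k)))"
  proof (rule sum.cong [OF refl])
    fix k assume "k \<in> {..c1}"
    then have "c1 + c2 - k = c2 + (c1 - k)"
      by auto
    then show "(c1 choose k) * falling_fact a2 k * falling_fact i (c1 + c2 - k)
        = falling_fact i c2 * ((c1 choose k) * falling_fact a2 k * falling_fact (i - c2) (c1 - k))"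
      by (simp add: falling_fact_add)
  qed
  also have "\<dots> = falling_fact i c2 * falling_fact (a2 + (i - c2)) c1"
    by (simp add: sum_distrib_left [symmetric] falling_fact_vandermonde)
  finally show ?thesis
    by (simp add: add.commute)
qed

lemma wact_wmon_mult:
  "wact (wmon_mult u m1 v m2) (Poly_Mapping.single ij w) =
   wact (Poly_Mapping.single m1 u) (wact (Poly_Mapping.single m2 v) (Poly_Mapping.single ij w))"
proof -
  obtain a1 b1 c1 e1 where m1: "m1 = WM a1 b1 c1 e1" by (cases m1)
  obtain a2 b2 c2 e2 where m2: "m2 = WM a2 b2 c2 e2" by (cases m2)
  obtain i j where ij: "ij = (i, j)" by (cases ij)
  define t where "t = (i - c2 + a2 - c1 + a1, j - e2 + b2 - e1 + b1)"
  define X where "X k = (c1 choose k) * falling_fact a2 k * falling_fact i (c1 + c2 - k)" for k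
  define Y where "Y k = (e1 choose k) * falling_fact b2 k * falling_fact j (e1 + e2 - k)" for k
  have "wact (wmon_mult u m1 v m2) (Poly_Mapping.single ij w) =
     (\<Sum>k1\<le>min c1 a2. \<Sum>k2\<le>min e1 b2. Poly_Mapping.single t (u * v * w * of_nat (X k1) * of_nat (Y k2)))"
    unfolding m1 m2 ij wmon_mult.simps wact_sum_left
  proof (intro sum.cong [OF refl])
    fix k1 k2 assume k: "k1 \<in> {..min c1 a2}" "k2 \<in> {..min e1 b2}"
    have "X k1 \<noteq> 0 \<Longrightarrow> Y k2 \<noteq> 0 \<Longrightarrow>
        (i - (c1 + c2 - k1) + (a1 + a2 - k1), j - (e1 + e2 - k2) + (b1 + b2 - k2)) = t"
      using k by (auto simp: X_def Y_def t_def falling_fact_eq_0_iff)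
    with k show "wact (Poly_Mapping.single (WM (a1 + a2 - k1) (b1 + b2 - k2) (c1 + c2 - k1) (e1 + e2 - k2))
          (u * v * of_nat (c1 choose k1) * ffact_c a2 k1 * of_nat (e1 choose k2) * ffact_c b2 k2))
        (Poly_Mapping.single (i, j) w) = Poly_Mapping.single t (u * v * w * of_nat (X k1) * of_nat (Y k2))"
      by (cases "X k1 = 0 \<or> Y k2 = 0")
        (auto simp: wact_single ffact_c_eq_falling_fact X_def Y_def algebra_simps)
  qed
  also have "\<dots> = Poly_Mapping.single t (u * v * w *
      of_nat (\<Sum>k1\<le>min c1 a2. X k1) * of_nat (\<Sum>k2\<le>min e1 b2. Y k2))"
    by (simp add: sum_single sum_distrib_left sum_distrib_right algebra_simps)
  also have "\<dots> = wact (Poly_Mapping.single m1 u) (wact (Poly_Mapping.single m2 v) (Poly_Mapping.single ij w))"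
    unfolding X_def Y_def falling_fact_compose
    by (simp add: m1 m2 ij wact_single t_def algebra_simps)
  finally show ?thesis .
qed

lemma wact_decomp_left:
  "wact P g = (\<Sum>m\<in>Poly_Mapping.keys P. wact (Poly_Mapping.single m (Poly_Mapping.lookup P m)) g)"
  by (subst poly_mapping_sum_single) (simp add: wact_sum_left)

lemma wact_decomp_right:
  "wact P g = (\<Sum>ij\<in>Poly_Mapping.keys g. wact P (Poly_Mapping.single ij (Poly_Mapping.lookup g ij)))"
  by (subst poly_mapping_sum_single) (simp add: wact_sum_right)

lemma wact_mult: "wact (P \<star> Q) g = wact P (wact Q g)"
proof -
  let ?P = "\<lambda>m. Poly_Mapping.single m (Poly_Mapping.lookup P m)"
  let ?Q = "\<lambda>m. Poly_Mapping.single m (Poly_Mapping.lookup Q m)"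
  let ?g = "\<lambda>ij. Poly_Mapping.single ij (Poly_Mapping.lookup g ij)"
  have "wact (P \<star> Q) g = (\<Sum>m1\<in>Poly_Mapping.keys P. \<Sum>m2\<in>Poly_Mapping.keys Q.
      \<Sum>ij\<in>Poly_Mapping.keys g. wact (?P m1) (wact (?Q m2) (?g ij)))"
    unfolding wmult_def wact_sum_left
    by (subst wact_decomp_right) (simp add: wact_wmon_mult)
  also have "\<dots> = (\<Sum>m2\<in>Poly_Mapping.keys Q. \<Sum>ij\<in>Poly_Mapping.keys g.
      \<Sum>m1\<in>Poly_Mapping.keys P. wact (?P m1) (wact (?Q m2) (?g ij)))"
    by (subst sum.swap) (simp add: sum.swap [where A = "Poly_Mapping.keys P"])
  also have "\<dots> = (\<Sum>m2\<in>Poly_Mapping.keys Q. \<Sum>ij\<in>Poly_Mapping.keys g. wact P (wact (?Q m2) (?g ij)))"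
    by (subst (2) wact_decomp_left) simp
  also have "\<dots> = wact P (wact Q g)"
    unfolding wact_def [of Q g] wact_sum_right by (simp add: wact_single)
  finally show ?thesis .
qed

fun wmon_order :: "wmon \<Rightarrow> nat" where
  "wmon_order (WM a b c e) = c + e"

text \<open>Apply P to x^c y^e, where \<partial>x^c \<partial>y^e has minimal order c + e among the terms of P.
  Only the terms with this derivative part survive, and they produce distinct monomials x^a y^b.\<close>

lemma weyl_eq_0I:
  assumes "\<And>i j. wact P (Poly_Mapping.single (i, j) 1) = 0"
  shows "P = 0"
proof (rule ccontr)
  assume "P \<noteq> 0"
  then obtain m0 where m0: "m0 \<in> Poly_Mapping.keys P"
    and min: "\<And>m. m \<in> Poly_Mapping.keys P \<Longrightarrow> wmon_order m0 \<le> wmon_order m"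
    using ex_has_least_nat [of "\<lambda>m. m \<in> Poly_Mapping.keys P" _ wmon_order] by fastforce
  obtain a0 b0 c0 e0 where m0_eq: "m0 = WM a0 b0 c0 e0" by (cases m0)
  have others: "Poly_Mapping.lookup (wmon_act m (c0, e0) (Poly_Mapping.lookup P m)) (a0, b0) = 0"
    if "m \<in> Poly_Mapping.keys P - {m0}" for m
  proof -
    obtain a b c e where m: "m = WM a b c e" by (cases m)
    have "c0 + e0 \<le> c + e"
      using that min [of m] by (simp add: m m0_eq)
    then show ?thesis
      using that by (cases "c \<le> c0 \<and> e \<le> e0") (auto simp: m m0_eq lookup_single)
  qed
  have "Poly_Mapping.lookup (wact P (Poly_Mapping.single (c0, e0) 1)) (a0, b0) =
      (\<Sum>m\<in>Poly_Mapping.keys P. Poly_Mapping.lookup (wmon_act m (c0, e0) (Poly_Mapping.lookup P m)) (a0, b0))"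
    by (subst wact_eq_sum_over_supersets [of _ _ "{(c0, e0)}"]) (auto simp: lookup_sum)
  also have "\<dots> = Poly_Mapping.lookup (wmon_act m0 (c0, e0) (Poly_Mapping.lookup P m0)) (a0, b0)"
    using m0 others by (subst sum.remove [of _ m0]) auto
  also have "\<dots> = Poly_Mapping.lookup P m0 * of_nat (falling_fact c0 c0) * of_nat (falling_fact e0 e0)"
    by (simp add: m0_eq)
  also have "\<dots> \<noteq> 0"
    using m0 by (simp add: in_keys_iff)
  finally show False
    using assms by simp
qed

lemma weyl_eqI:
  assumes "\<And>i j. wact P (Poly_Mapping.single (i, j) 1) = wact Q (Poly_Mapping.single (i, j) 1)"
  shows "P = Q"
  using weyl_eq_0I [of "P - Q"] assms by (simp add: wact_diff_left)

section \<open>Weights and the Euler operator s\<close>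

definition weight_homogeneous :: "real \<times> real \<Rightarrow> real \<Rightarrow> weyl2 \<Rightarrow> bool" where
  "weight_homogeneous w W P \<longleftrightarrow> (\<forall>m\<in>Poly_Mapping.keys P. wweight w m = W)"

lemma weight_homogeneous_single: "wweight w m = W \<Longrightarrow> weight_homogeneous w W (Poly_Mapping.single m u)"
  by (simp add: weight_homogeneous_def)

lemma weight_homogeneous_add: "weight_homogeneous w W P \<Longrightarrow> weight_homogeneous w W Q \<Longrightarrow> weight_homogeneous w W (P + Q)"
  using keys_add [of P Q] by (auto simp: weight_homogeneous_def)

lemma weight_homogeneous_sum: "(\<And>x. x \<in> S \<Longrightarrow> weight_homogeneous w W (F x)) \<Longrightarrow> weight_homogeneous w W (\<Sum>x\<in>S. F x)"
  by (induction S rule: infinite_finite_induct)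
    (auto simp: weight_homogeneous_add, simp_all add: weight_homogeneous_def)

lemma weight_homogeneous_wmon_mult: "weight_homogeneous w (wweight w m1 + wweight w m2) (wmon_mult u m1 v m2)"
proof -
  obtain a1 b1 c1 e1 where m1: "m1 = WM a1 b1 c1 e1" by (cases m1)
  obtain a2 b2 c2 e2 where m2: "m2 = WM a2 b2 c2 e2" by (cases m2)
  obtain w1 w2 where w: "w = (w1, w2)" by (cases w)
  show ?thesis
    unfolding m1 m2 wmon_mult.simps
    by (intro weight_homogeneous_sum weight_homogeneous_single) (auto simp: w of_nat_diff algebra_simps)
qed

lemma weight_homogeneous_wmult:
  assumes "weight_homogeneous w W1 P" and "weight_homogeneous w W2 Q"
  shows "weight_homogeneous w (W1 + W2) (P \<star> Q)"
  unfolding wmult_def using assms weight_homogeneous_wmon_mult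
  by (intro weight_homogeneous_sum) (auto simp: weight_homogeneous_def)

fun wdeg :: "real \<times> real \<Rightarrow> nat \<times> nat \<Rightarrow> real" where
  "wdeg (w1, w2) (i, j) = w1 * real i + w2 * real j"

lemma wact_wone: "wact wone g = g"
  by (subst (1 2) poly_mapping_sum_single) (auto simp: wone_def wact_sum_right wact_single intro!: sum.cong)

lemma wact_s_op:
  "wact (s_op w) (Poly_Mapping.single (i, j) v) = Poly_Mapping.single (i, j) (of_real (wdeg w (i, j)) * v)"
  by (cases w; cases i; cases j) (simp_all add: wact_add_left wact_single single_add [symmetric] algebra_simps)

lemma wact_eval_s:
  "wact (eval_s w c) (Poly_Mapping.single ij v) = Poly_Mapping.single ij (poly c (of_real (wdeg w ij)) * v)"
proof -
  obtain i j where ij: "ij = (i, j)" by (cases ij)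
  have pow: "wact (wpow (s_op w) n) (Poly_Mapping.single (i, j) v) =
      Poly_Mapping.single (i, j) (of_real (wdeg w (i, j)) ^ n * v)" for n v
    by (induction n arbitrary: v) (simp_all add: wact_wone wact_mult wact_s_op algebra_simps)
  have "wact (eval_s w c) (Poly_Mapping.single ij v) =
      (\<Sum>n\<le>degree c. Poly_Mapping.single ij (coeff c n * of_real (wdeg w ij) ^ n * v))"
    by (simp add: eval_s_def wact_sum_left wact_mult pow ij wact_single mult.assoc)
  also have "\<dots> = Poly_Mapping.single ij (poly c (of_real (wdeg w ij)) * v)"
    by (simp add: sum_single poly_altdef sum_distrib_right)
  finally show ?thesis .
qed

lemma eval_s_mult: "eval_s w (r * b) = eval_s w r \<star> eval_s w b"
  by (rule weyl_eqI) (simp add: wact_mult wact_eval_s)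

lemma weight_homogeneous_eval_s: "weight_homogeneous w 0 (eval_s w c)"
proof -
  have s: "weight_homogeneous w 0 (s_op w)"
    by (cases w) (auto intro!: weight_homogeneous_add weight_homogeneous_single)
  have "weight_homogeneous w 0 (wpow (s_op w) n)" for n
  proof (induction n)
    case 0
    show ?case
      by (cases w) (simp add: wone_def weight_homogeneous_single)
  next
    case (Suc n)
    show ?case
      using weight_homogeneous_wmult [OF s Suc.IH] by simp
  qed
  moreover have "weight_homogeneous w 0 (Poly_Mapping.single (WM 0 0 0 0) a)" for a
    by (cases w) (simp add: weight_homogeneous_single)
  ultimately show ?thesis
    unfolding eval_s_def using weight_homogeneous_wmult [of w 0 _ 0] by (intro weight_homogeneous_sum) simp
qed

lemma eval_s_linear_neq_0:
  assumes "w \<noteq> (0, 0)"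
  shows "eval_s w [:c, 1:] \<noteq> 0"
proof
  assume "eval_s w [:c, 1:] = 0"
  then have "Poly_Mapping.lookup (wact (eval_s w [:c, 1:]) (Poly_Mapping.single ij 1)) ij = 0" for ij
    by simp
  then have "poly [:c, 1:] (of_real (wdeg w ij)) = 0" for ij
    by (simp add: wact_eval_s)
  from this [of "(0, 0)"] this [of "(1, 0)"] this [of "(0, 1)"] assms show False
    by (cases w) simp
qed

section \<open>Initial forms and b-functions\<close>

lemma lookup_init_form:
  "Poly_Mapping.lookup (init_form w P) m =
     (if wweight w m = Max (wweight w ` Poly_Mapping.keys P) then Poly_Mapping.lookup P m else 0)"
  by (auto simp: init_form_def lookup_sum lookup_single when_def in_keys_iff sum.delta')

lemma init_form_add_lower:
  assumes "A \<noteq> 0" and "weight_homogeneous w W A" and lower: "\<forall>m\<in>Poly_Mapping.keys L. wweight w m < W"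
  shows "init_form w (A + L) = A"
proof -
  have A: "\<And>m. m \<in> Poly_Mapping.keys A \<Longrightarrow> wweight w m = W"
    using assms(2) by (simp add: weight_homogeneous_def)
  have L: "Poly_Mapping.lookup L m = 0" if "wweight w m = W" for m
    using that lower by (auto simp: in_keys_iff)
  have max: "Max (wweight w ` Poly_Mapping.keys (A + L)) = W"
  proof (rule Max_eqI)
    fix y
    assume "y \<in> wweight w ` Poly_Mapping.keys (A + L)"
    then obtain m where "m \<in> Poly_Mapping.keys A \<union> Poly_Mapping.keys L" "y = wweight w m"
      using keys_add [of A L] by blast
    then show "y \<le> W"
      using A lower by (auto intro: less_imp_le)
  next
    obtain m where m: "m \<in> Poly_Mapping.keys A"
      using \<open>A \<noteq> 0\<close> by fastforce
    then have "m \<in> Poly_Mapping.keys (A + L)"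
      using L [OF A [OF m]] by (simp add: in_keys_iff lookup_add)
    then show "W \<in> wweight w ` Poly_Mapping.keys (A + L)"
      using A [OF m] by force
  qed simp_all
  show ?thesis
  proof (rule poly_mapping_eqI)
    fix m
    show "Poly_Mapping.lookup (init_form w (A + L)) m = Poly_Mapping.lookup A m"
    proof (cases "wweight w m = W")
      case True
      then show ?thesis
        by (simp add: lookup_init_form max lookup_add L)
    next
      case False
      then have "Poly_Mapping.lookup A m = 0"
        using A by (auto simp: in_keys_iff)
      with False show ?thesis
        by (simp add: lookup_init_form max)
    qed
  qed
qed

definition deg_part :: "real \<times> real \<Rightarrow> real \<Rightarrow> cpoly2 \<Rightarrow> cpoly2" where
  "deg_part w d g = Poly_Mapping.mapp (\<lambda>ij v. if wdeg w ij = d then v else 0) g"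

lemma lookup_deg_part:
  "Poly_Mapping.lookup (deg_part w d g) ij = (if wdeg w ij = d then Poly_Mapping.lookup g ij else 0)"
  by (simp add: deg_part_def lookup_mapp when_def in_keys_iff)

lemma wdeg_keys_wmon_act:
  assumes "t \<in> Poly_Mapping.keys (wmon_act m ij u)"
  shows "wdeg w t = wdeg w ij - wweight w m"
proof -
  obtain a b c e where m: "m = WM a b c e" by (cases m)
  obtain i j where ij: "ij = (i, j)" by (cases ij)
  from assms have "c \<le> i" "e \<le> j" "t = (i - c + a, j - e + b)"
    by (auto simp: m ij falling_fact_eq_0_iff split: if_splits)
  then show ?thesis
    by (cases w) (simp add: m ij of_nat_diff algebra_simps)
qed

text \<open>Every term of P lowers the weighted degree by its weight, so the terms of degree
  d - W of P applied to g come exactly from the top-weight part of P acting on the lowest part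
  of g.\<close>

lemma init_form_annihilates_lowest_part:
  assumes Pg: "wact P g = 0" and lowest: "\<forall>ij\<in>Poly_Mapping.keys g. d \<le> wdeg w ij"
  shows "wact (init_form w P) (deg_part w d g) = 0"
proof (rule poly_mapping_eqI)
  fix t
  define W where "W = Max (wweight w ` Poly_Mapping.keys P)"
  let ?coeff = "\<lambda>P g m ij. Poly_Mapping.lookup
      (wmon_act m ij (Poly_Mapping.lookup P m * Poly_Mapping.lookup g ij)) t"
  have top_terms: "?coeff (init_form w P) (deg_part w d g) m ij =
      (if wdeg w t = d - W then ?coeff P g m ij else 0)"
    if m: "m \<in> Poly_Mapping.keys P" and ij: "ij \<in> Poly_Mapping.keys g" for m ij
  proof -
    have "wweight w m \<le> W"
      using m by (simp add: W_def)
    moreover have "d \<le> wdeg w ij"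
      using lowest ij by blast
    moreover have "?coeff P g m ij = 0" if "wdeg w t \<noteq> wdeg w ij - wweight w m"
      using that wdeg_keys_wmon_act [of t m ij _ w] by (auto simp: in_keys_iff)
    ultimately show ?thesis
      by (auto simp: lookup_init_form lookup_deg_part W_def [symmetric])
  qed
  have "Poly_Mapping.lookup (wact (init_form w P) (deg_part w d g)) t =
      (\<Sum>m\<in>Poly_Mapping.keys P. \<Sum>ij\<in>Poly_Mapping.keys g. ?coeff (init_form w P) (deg_part w d g) m ij)"
    by (subst wact_eq_sum_over_supersets [of "Poly_Mapping.keys P" _ "Poly_Mapping.keys g"])
      (auto simp: lookup_sum in_keys_iff lookup_init_form lookup_deg_part split: if_splits)
  also have "\<dots> = (if wdeg w t = d - W then Poly_Mapping.lookup (wact P g) t else 0)"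
    by (simp add: top_terms wact_def lookup_sum)
  finally show "Poly_Mapping.lookup (wact (init_form w P) (deg_part w d g)) t = Poly_Mapping.lookup 0 t"
    by (simp add: Pg)
qed

lemma init_ideal_annihilates_lowest_part:
  assumes "Q \<in> init_ideal w (Ann g)" and lowest: "\<forall>ij\<in>Poly_Mapping.keys g. d \<le> wdeg w ij"
  shows "wact Q (deg_part w d g) = 0"
  using assms(1) unfolding init_ideal_def
proof induction
  case (gen h R)
  then show ?case
    using init_form_annihilates_lowest_part [OF _ lowest] by (auto simp: Ann_def wact_mult)
qed (simp_all add: wact_add_left)

lemma root_of_eval_s_in_init_ideal:
  assumes "eval_s w c \<in> init_ideal w (Ann g)"
    and lowest: "\<forall>ij\<in>Poly_Mapping.keys g. d \<le> wdeg w ij"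
    and t: "t \<in> Poly_Mapping.keys g" "wdeg w t = d"
  shows "poly c (of_real d) = 0"
proof -
  let ?h = "deg_part w d g"
  have "wact (eval_s w c) ?h =
      (\<Sum>ij\<in>Poly_Mapping.keys ?h. Poly_Mapping.single ij (poly c (of_real d) * Poly_Mapping.lookup ?h ij))"
    by (subst wact_decomp_right, rule sum.cong)
      (auto simp: wact_eval_s in_keys_iff lookup_deg_part split: if_splits)
  then have "Poly_Mapping.lookup (wact (eval_s w c) ?h) t = poly c (of_real d) * Poly_Mapping.lookup g t"
    using t by (simp add: lookup_sum lookup_single when_def in_keys_iff lookup_deg_part)
  moreover have "wact (eval_s w c) ?h = 0"
    using init_ideal_annihilates_lowest_part [OF assms(1) lowest] .
  ultimately show ?thesis
    using t by (simp add: in_keys_iff)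
qed

lemma is_b_function_linearI:
  assumes lowest: "\<forall>ij\<in>Poly_Mapping.keys g. d \<le> wdeg w ij" "t \<in> Poly_Mapping.keys g" "wdeg w t = d"
    and P: "P \<in> Ann g" "init_form w P = eval_s w [:- of_real d, 1:]"
  shows "is_b_function (Ann g) w [:- of_real d, 1:]"
  unfolding is_b_function_def
proof (intro conjI set_eqI iffI; simp)
  fix c :: "complex poly"
  assume "eval_s w c \<in> init_ideal w (Ann g)"
  then show "[:- of_real d, 1:] dvd c"
    using root_of_eval_s_in_init_ideal [OF _ lowest] by (simp add: poly_eq_0_iff_dvd)
next
  fix c :: "complex poly"
  assume "[:- of_real d, 1:] dvd c"
  then obtain r where "c = r * [:- of_real d, 1:]"
    by (metis dvdE mult.commute)
  then have "eval_s w c = eval_s w r \<star> init_form w P"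
    by (simp only: eval_s_mult P(2))
  also have "\<dots> \<in> init_ideal w (Ann g)"
    unfolding init_ideal_def using P(1) by (intro left_ideal_gen.gen) auto
  finally show "eval_s w c \<in> init_ideal w (Ann g)" .
qed

section \<open>Exchanging x and y\<close>

fun wmon_swap :: "wmon \<Rightarrow> wmon" where
  "wmon_swap (WM a b c e) = WM b a e c"

lemma wmon_swap_swap [simp]: "wmon_swap (wmon_swap m) = m"
  by (cases m) simp

lemma inj_on_wmon_swap: "inj_on wmon_swap A"
  by (metis inj_onI wmon_swap_swap)

lemma wweight_wmon_swap [simp]: "wweight (prod.swap w) (wmon_swap m) = wweight w m"
  by (cases w; cases m) simp

definition weyl_swap :: "weyl2 \<Rightarrow> weyl2" where
  "weyl_swap = Poly_Mapping.map_key wmon_swap"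

definition cpoly_swap :: "cpoly2 \<Rightarrow> cpoly2" where
  "cpoly_swap = Poly_Mapping.map_key prod.swap"

lemma lookup_weyl_swap [simp]: "Poly_Mapping.lookup (weyl_swap P) m = Poly_Mapping.lookup P (wmon_swap m)"
  by (simp add: weyl_swap_def map_key.rep_eq inj_on_wmon_swap)

lemma lookup_cpoly_swap [simp]: "Poly_Mapping.lookup (cpoly_swap g) ij = Poly_Mapping.lookup g (prod.swap ij)"
  by (simp add: cpoly_swap_def map_key.rep_eq)

lemma keys_weyl_swap: "Poly_Mapping.keys (weyl_swap P) = wmon_swap ` Poly_Mapping.keys P"
  by (rule set_eqI) (metis image_iff in_keys_iff lookup_weyl_swap wmon_swap_swap)

lemma keys_cpoly_swap: "Poly_Mapping.keys (cpoly_swap g) = prod.swap ` Poly_Mapping.keys g"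
proof (rule set_eqI)
  fix ij :: "nat \<times> nat"
  show "ij \<in> Poly_Mapping.keys (cpoly_swap g) \<longleftrightarrow> ij \<in> prod.swap ` Poly_Mapping.keys g"
    by (cases ij) (simp add: in_keys_iff)
qed

lemma weyl_swap_swap [simp]: "weyl_swap (weyl_swap P) = P"
  by (rule poly_mapping_eqI) simp

lemma cpoly_swap_swap [simp]: "cpoly_swap (cpoly_swap g) = g"
  by (rule poly_mapping_eqI) simp

lemma inj_weyl_swap: "inj weyl_swap"
  by (metis injI weyl_swap_swap)

lemma weyl_swap_add: "weyl_swap (P + Q) = weyl_swap P + weyl_swap Q"
  by (rule poly_mapping_eqI) (simp add: lookup_add)

lemma weyl_swap_0 [simp]: "weyl_swap 0 = 0"
  by (rule poly_mapping_eqI) simp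

lemma cpoly_swap_single [simp]: "cpoly_swap (Poly_Mapping.single ij v) = Poly_Mapping.single (prod.swap ij) v"
  by (rule poly_mapping_eqI) (cases ij; auto simp: lookup_single when_def)

lemma cpoly_swap_sum: "cpoly_swap (\<Sum>x\<in>S. F x) = (\<Sum>x\<in>S. cpoly_swap (F x))"
  by (rule poly_mapping_eqI) (simp add: lookup_sum)

lemma cpoly_swap_eq_0_iff [simp]: "cpoly_swap g = 0 \<longleftrightarrow> g = 0"
  using keys_cpoly_swap [of g] by (metis image_is_empty keys_eq_empty)

lemma wmon_act_swap: "wmon_act (wmon_swap m) (prod.swap ij) u = cpoly_swap (wmon_act m ij u)"
  by (cases m; cases ij) (simp add: mult_ac)

lemma wact_swap: "wact (weyl_swap P) (cpoly_swap g) = cpoly_swap (wact P g)"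
proof -
  have "wact (weyl_swap P) (cpoly_swap g) = (\<Sum>m\<in>Poly_Mapping.keys P. \<Sum>ij\<in>Poly_Mapping.keys g.
      wmon_act (wmon_swap m) (prod.swap ij) (Poly_Mapping.lookup P m * Poly_Mapping.lookup g ij))"
    unfolding wact_def keys_weyl_swap keys_cpoly_swap
    by (simp add: sum.reindex [OF inj_on_wmon_swap] sum.reindex [OF inj_swap])
  then show ?thesis
    by (simp add: wmon_act_swap wact_def cpoly_swap_sum)
qed

lemma wact_weyl_swap: "wact (weyl_swap P) g = cpoly_swap (wact P (cpoly_swap g))"
  using wact_swap [of P "cpoly_swap g"] by simp

lemma weyl_swap_mult: "weyl_swap (P \<star> Q) = weyl_swap P \<star> weyl_swap Q"
  by (rule weyl_eqI) (simp add: wact_weyl_swap wact_mult)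

lemma Ann_cpoly_swap: "Ann (cpoly_swap g) = weyl_swap ` Ann g"
proof -
  have swap_Ann: "P \<in> Ann (cpoly_swap g) \<longleftrightarrow> weyl_swap P \<in> Ann g" for P
    using wact_swap [of "weyl_swap P" g] by (simp add: Ann_def)
  show ?thesis
  proof (intro equalityI subsetI)
    fix P
    assume "P \<in> Ann (cpoly_swap g)"
    then show "P \<in> weyl_swap ` Ann g"
      by (intro image_eqI [where x = "weyl_swap P"]) (simp_all add: swap_Ann)
  next
    fix P
    assume "P \<in> weyl_swap ` Ann g"
    then obtain Q where "Q \<in> Ann g" "P = weyl_swap Q"
      by blast
    then show "P \<in> Ann (cpoly_swap g)"
      by (simp add: swap_Ann)
  qed
qed

lemma init_form_weyl_swap: "init_form (prod.swap w) (weyl_swap P) = weyl_swap (init_form w P)"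
proof -
  have "wweight (prod.swap w) ` Poly_Mapping.keys (weyl_swap P) = wweight w ` Poly_Mapping.keys P"
    by (simp add: keys_weyl_swap image_image)
  moreover have "wweight (prod.swap w) m = wweight w (wmon_swap m)" for m
    using wweight_wmon_swap [of w "wmon_swap m"] by simp
  ultimately show ?thesis
    by (intro poly_mapping_eqI) (simp add: lookup_init_form)
qed

lemma left_ideal_gen_weyl_swap: "left_ideal_gen (weyl_swap ` G) = weyl_swap ` left_ideal_gen G"
proof (intro equalityI subsetI)
  fix P assume "P \<in> left_ideal_gen (weyl_swap ` G)"
  then show "P \<in> weyl_swap ` left_ideal_gen G"
  proof induction
    case zero
    show ?case
      using left_ideal_gen.zero by force
  next
    case (gen h Q)
    then obtain g where "g \<in> G" "h = weyl_swap g"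
      by blast
    then have "Q \<star> h = weyl_swap (weyl_swap Q \<star> g)"
      by (simp add: weyl_swap_mult)
    then show ?case
      using left_ideal_gen.gen [OF \<open>g \<in> G\<close>] by blast
  next
    case (add P R)
    then obtain P' R' where "P' \<in> left_ideal_gen G" "R' \<in> left_ideal_gen G"
      and "P + R = weyl_swap (P' + R')"
      by (auto simp: weyl_swap_add)
    then show ?case
      using left_ideal_gen.add by blast
  qed
next
  fix P assume "P \<in> weyl_swap ` left_ideal_gen G"
  then obtain P' where "P' \<in> left_ideal_gen G" "P = weyl_swap P'"
    by blast
  then show "P \<in> left_ideal_gen (weyl_swap ` G)"
  proof (induction arbitrary: P)
    case (gen g Q)
    then show ?case
      by (simp add: weyl_swap_mult left_ideal_gen.gen)
  qed (auto simp: weyl_swap_add intro: left_ideal_gen.intros)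
qed

lemma eval_s_swap: "eval_s (prod.swap w) c = weyl_swap (eval_s w c)"
  by (rule weyl_eqI) (cases w; simp add: wact_weyl_swap wact_eval_s algebra_simps)

lemma is_b_function_swap:
  assumes "is_b_function (Ann g) w b"
  shows "is_b_function (Ann (cpoly_swap g)) (prod.swap w) b"
proof -
  have "init_ideal (prod.swap w) (Ann (cpoly_swap g)) = weyl_swap ` init_ideal w (Ann g)"
    by (simp add: init_ideal_def Ann_cpoly_swap image_image init_form_weyl_swap
        flip: left_ideal_gen_weyl_swap)
  then have "eval_s (prod.swap w) c \<in> init_ideal (prod.swap w) (Ann (cpoly_swap g)) \<longleftrightarrow>
      eval_s w c \<in> init_ideal w (Ann g)" for c
    by (simp add: eval_s_swap inj_image_mem_iff [OF inj_weyl_swap])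
  with assms show ?thesis
    by (simp add: is_b_function_def)
qed

section \<open>Powers of f\<close>

lemma single_power: "Poly_Mapping.single (a, b) (1 :: complex) ^ k = Poly_Mapping.single (a * k, b * k) 1"
  by (induction k) (simp_all add: mult_single zero_prod_def [symmetric])

lemma binomial_expansion_cpoly2:
  "(Poly_Mapping.single (a1, b1) 1 + Poly_Mapping.single (a2, b2) 1 :: cpoly2) ^ l =
   (\<Sum>m\<le>l. Poly_Mapping.single (a1 * m + a2 * (l - m), b1 * m + b2 * (l - m)) (of_nat (l choose m)))"
proof -
  have of_nat_single: "(of_nat n :: cpoly2) * Poly_Mapping.single t 1 = Poly_Mapping.single t (of_nat n)" for n t
    by (simp add: mult_single flip: single_of_nat)
  show ?thesis
    by (simp add: binomial_ring single_power mult_single of_nat_single mult.assoc)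
qed

lemma f_pq_power:
  "f_pq p q ^ l = (\<Sum>m\<le>l. Poly_Mapping.single (p * m, q * (l - m)) (of_nat (l choose m)))"
  unfolding f_pq_def by (simp add: binomial_expansion_cpoly2)

lemma cpoly_swap_f_pq_power: "cpoly_swap (f_pq q p ^ l) = f_pq p q ^ l"
proof -
  have "f_pq p q ^ l = (\<Sum>m\<le>l. Poly_Mapping.single (p * (l - m), q * m) (of_nat (l choose m)))"
    unfolding f_pq_def by (subst add.commute) (simp add: binomial_expansion_cpoly2)
  then show ?thesis
    by (simp add: f_pq_power cpoly_swap_sum)
qed

lemma keys_f_pq_power:
  assumes "ij \<in> Poly_Mapping.keys (f_pq p q ^ l)"
  obtains m where "m \<le> l" "ij = (p * m, q * (l - m))"
  using assms keys_sum [of "\<lambda>m. Poly_Mapping.single (p * m, q * (l - m)) (of_nat (l choose m) :: complex)" "{..l}"]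
  unfolding f_pq_power by (auto split: if_splits)

lemma x_power_in_keys_f_pq_power:
  assumes "0 < p"
  shows "(p * l, 0) \<in> Poly_Mapping.keys (f_pq p q ^ l)"
proof -
  have "Poly_Mapping.lookup (f_pq p q ^ l) (p * l, 0) = (\<Sum>m\<le>l. if m = l then of_nat (l choose m) else 0)"
    unfolding f_pq_power lookup_sum using assms by (intro sum.cong refl) (auto simp: lookup_single when_def)
  then show ?thesis
    by (simp add: in_keys_iff)
qed

text \<open>For z = q this is y \<partial>y f^l = (q/p) y^q x^(1-p) \<partial>x f^l, read off coefficientwise.\<close>

lemma f_pq_power_shift_identity:
  "(\<Sum>m\<le>l. Poly_Mapping.single (p * m, q * (l - m)) (z * of_nat ((l - m) * (l choose m)))) =
   (\<Sum>m\<le>l. Poly_Mapping.single (p * m - p, q * (l - m) + q) (z * of_nat (m * (l choose m))) :: cpoly2)"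
proof -
  have absorb: "Suc m * (l choose Suc m) = (l - m) * (l choose m)" for m
    using binomial_absorption [of m l] binomial_absorb_comp [of l m] by simp
  have "(\<Sum>m\<le>l. Poly_Mapping.single (p * m - p, q * (l - m) + q) (z * of_nat (m * (l choose m))) :: cpoly2)
      = (\<Sum>m<l. Poly_Mapping.single (p * Suc m - p, q * (l - Suc m) + q) (z * of_nat (Suc m * (l choose Suc m))))"
    by (simp add: sum.atMost_shift del: of_nat_mult mult_Suc)
  also have "\<dots> = (\<Sum>m<l. Poly_Mapping.single (p * m, q * (l - m)) (z * of_nat ((l - m) * (l choose m))))"
  proof (rule sum.cong [OF refl])
    fix m
    assume "m \<in> {..<l}"
    then have "l - m = Suc (l - Suc m)"
      by simp
    then have "p * Suc m - p = p * m" "q * (l - Suc m) + q = q * (l - m)"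
      by simp_all
    then show "Poly_Mapping.single (p * Suc m - p, q * (l - Suc m) + q) (z * of_nat (Suc m * (l choose Suc m)))
        = Poly_Mapping.single (p * m, q * (l - m)) (z * of_nat ((l - m) * (l choose m)))"
      by (simp only: absorb)
  qed
  also have "\<dots> = (\<Sum>m\<le>l. Poly_Mapping.single (p * m, q * (l - m)) (z * of_nat ((l - m) * (l choose m))))"
    by (simp add: lessThan_Suc_atMost [symmetric])
  finally show ?thesis ..
qed

lemma lower_triangular_solvable:
  fixes F :: "nat \<Rightarrow> nat \<Rightarrow> 'a::field"
  assumes "\<And>n. n < N \<Longrightarrow> F n n \<noteq> 0"
  shows "\<exists>d. \<forall>n<N. (\<Sum>j\<le>n. F n j * d j) = v n"
  using assms
proof (induction N)
  case 0
  show ?case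
    by simp
next
  case (Suc N)
  then obtain d where d: "\<forall>n<N. (\<Sum>j\<le>n. F n j * d j) = v n"
    by auto
  define d' where "d' = d(N := (v N - (\<Sum>j<N. F N j * d j)) / F N N)"
  have "(\<Sum>j\<le>n. F n j * d' j) = v n" if "n < Suc N" for n
  proof (cases "n = N")
    case True
    have "(\<Sum>j\<le>N. F N j * d' j) = (\<Sum>j<N. F N j * d j) + F N N * d' N"
      by (simp add: lessThan_Suc_atMost [symmetric] d'_def)
    with True Suc.prems [of N] show ?thesis
      by (simp add: d'_def)
  next
    case False
    with that have "n < N"
      by simp
    then have "(\<Sum>j\<le>n. F n j * d' j) = (\<Sum>j\<le>n. F n j * d j)"
      by (intro sum.cong) (auto simp: d'_def)
    with d \<open>n < N\<close> show ?thesis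
      by simp
  qed
  then show ?case
    by blast
qed

text \<open>R is a combination of the operators x^(p j) \<partial>x^(p (j+1)), j < N. Each of them kills x^(p m)
  for m \<le> j, so the coefficients solve a lower triangular system.\<close>

lemma exists_x_lowering_operator:
  assumes "0 < p"
  obtains R where "\<And>w1 w2 m. m \<in> Poly_Mapping.keys R \<Longrightarrow> wweight (w1, w2) m = real p * w1"
    and "\<And>m b u. m \<le> N \<Longrightarrow>
      wact R (Poly_Mapping.single (p * m, b) u) = Poly_Mapping.single (p * m - p, b) (- of_nat m * u)"
proof -
  define F where "F n j = (of_nat (falling_fact (p * (n + 1)) (p * (j + 1))) :: complex)" for n j
  have "\<exists>d. \<forall>n<N. (\<Sum>j\<le>n. F n j * d j) = - of_nat (n + 1)"
    by (rule lower_triangular_solvable) (simp add: F_def)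
  then obtain d where d: "\<forall>n<N. (\<Sum>j\<le>n. F n j * d j) = - of_nat (n + 1)"
    by blast
  define R where "R = (\<Sum>j<N. Poly_Mapping.single (WM (p * j) 0 (p * (j + 1)) 0) (d j))"
  show ?thesis
  proof
    fix w1 w2 m
    assume "m \<in> Poly_Mapping.keys R"
    then obtain j where "m = WM (p * j) 0 (p * (j + 1)) 0"
      using keys_sum [of "\<lambda>j. Poly_Mapping.single (WM (p * j) 0 (p * (j + 1)) 0) (d j)" "{..<N}"]
      by (auto simp: R_def split: if_splits)
    then show "wweight (w1, w2) m = real p * w1"
      by (simp add: algebra_simps)
  next
    fix m b u
    assume "m \<le> N"
    have summand: "wact (Poly_Mapping.single (WM (p * j) 0 (p * (j + 1)) 0) (d j)) (Poly_Mapping.single (p * m, b) u)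
        = Poly_Mapping.single (p * m - p, b) (u * (d j * of_nat (falling_fact (p * m) (p * (j + 1)))))" for j
    proof (cases "j < m")
      case True
      then have "p * (j + 1) \<le> p * m"
        by (intro mult_le_mono2) simp
      then have "p * m - p * (j + 1) + p * j = p * m - p"
        by (simp add: algebra_simps)
      then show ?thesis
        by (simp add: wact_single algebra_simps)
    next
      case False
      then have "p * m < p * (j + 1)"
        using assms by (intro mult_less_mono2) simp_all
      then show ?thesis
        by (simp add: wact_single)
    qed
    have "(\<Sum>j<N. d j * of_nat (falling_fact (p * m) (p * (j + 1)))) = - of_nat m"
    proof (cases m)
      case 0
      with assms show ?thesis
        by simp
    next
      case (Suc n)
      have "(\<Sum>j<N. d j * of_nat (falling_fact (p * m) (p * (j + 1)))) = (\<Sum>j\<le>n. F n j * d j)"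
        using \<open>m \<le> N\<close> assms
        by (intro sum.mono_neutral_cong_right) (auto simp: Suc F_def)
      with d Suc \<open>m \<le> N\<close> show ?thesis
        by simp
    qed
    then show "wact R (Poly_Mapping.single (p * m, b) u) = Poly_Mapping.single (p * m - p, b) (- of_nat m * u)"
      unfolding R_def wact_sum_left summand sum_single by (simp add: sum_distrib_left [symmetric] mult.commute)
  qed
qed

text \<open>s - p l w1 multiplies x^(p m) y^(q (l-m)) by \<kappa> (l - m), where \<kappa> = q w2 - p w1; on f^l
  this is cancelled by \<kappa> y^q R.\<close>

lemma Ann_f_pq_power_memberI:
  fixes p q l :: nat and w1 w2 :: real
  defines "\<kappa> \<equiv> real q * w2 - real p * w1"
  assumes R_act: "\<And>m b u. m \<le> l \<Longrightarrow>
      wact R (Poly_Mapping.single (p * m, b) u) = Poly_Mapping.single (p * m - p, b) (- of_nat m * u)"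
  shows "eval_s (w1, w2) [:- of_real (real p * real l * w1), 1:]
      + Poly_Mapping.single (WM 0 q 0 0) (of_real \<kappa>) \<star> R \<in> Ann (f_pq p q ^ l)"
    (is "?A + ?L \<in> _")
proof -
  define A where "A = ?A"
  define L where "L = ?L"
  have A_act: "wact A (Poly_Mapping.single (p * m, q * (l - m)) v) =
      Poly_Mapping.single (p * m, q * (l - m)) (of_real \<kappa> * of_nat (l - m) * v)" if "m \<le> l" for m v
  proof -
    have "wdeg (w1, w2) (p * m, q * (l - m)) - real p * real l * w1 = \<kappa> * real (l - m)"
      using that by (simp add: \<kappa>_def of_nat_diff algebra_simps)
    then have "of_real (wdeg (w1, w2) (p * m, q * (l - m))) - of_real (real p * real l * w1) =
        (of_real \<kappa> * of_nat (l - m) :: complex)"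
      by (metis of_real_diff of_real_mult of_real_of_nat_eq)
    then show ?thesis
      by (simp add: A_def wact_eval_s)
  qed
  have L_act: "wact L (Poly_Mapping.single (p * m, q * (l - m)) v) =
      Poly_Mapping.single (p * m - p, q * (l - m) + q) (- (of_real \<kappa> * of_nat m * v))" if "m \<le> l" for m v
    unfolding L_def wact_mult R_act [OF that] by (simp add: wact_single algebra_simps)
  have A_f: "wact A (f_pq p q ^ l) =
      (\<Sum>m\<le>l. Poly_Mapping.single (p * m, q * (l - m)) (of_real \<kappa> * of_nat ((l - m) * (l choose m))))"
    unfolding f_pq_power wact_sum_right by (intro sum.cong refl) (simp add: A_act mult.assoc)
  have L_f: "wact L (f_pq p q ^ l) =
      - (\<Sum>m\<le>l. Poly_Mapping.single (p * m - p, q * (l - m) + q) (of_real \<kappa> * of_nat (m * (l choose m))))"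
    unfolding f_pq_power wact_sum_right sum_negf [symmetric]
    by (intro sum.cong refl) (simp add: L_act single_uminus mult.assoc)
  have "wact (A + L) (f_pq p q ^ l) = 0"
    unfolding wact_add_left A_f L_f f_pq_power_shift_identity by simp
  then show ?thesis
    by (simp add: Ann_def A_def L_def)
qed

lemma exists_Ann_f_pq_power_with_init_form:
  fixes w1 w2 :: real
  assumes p: "0 < p" and le: "real p * w1 \<le> real q * w2" and nz: "(w1, w2) \<noteq> (0, 0)"
  shows "\<exists>P\<in>Ann (f_pq p q ^ l). init_form (w1, w2) P = eval_s (w1, w2) [:- of_real (real p * real l * w1), 1:]"
proof -
  define \<kappa> where "\<kappa> = real q * w2 - real p * w1"
  define A where "A = eval_s (w1, w2) [:- of_real (real p * real l * w1), 1:]"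
  obtain R where R_weight: "\<And>w1 w2 m. m \<in> Poly_Mapping.keys R \<Longrightarrow> wweight (w1, w2) m = real p * w1"
    and R_act: "\<And>m b u. m \<le> l \<Longrightarrow>
      wact R (Poly_Mapping.single (p * m, b) u) = Poly_Mapping.single (p * m - p, b) (- of_nat m * u)"
    using exists_x_lowering_operator [OF p] by blast
  define L where "L = Poly_Mapping.single (WM 0 q 0 0) (of_real \<kappa> :: complex) \<star> R"
  have "A + L \<in> Ann (f_pq p q ^ l)"
    unfolding A_def L_def \<kappa>_def using R_act by (rule Ann_f_pq_power_memberI)
  moreover have "init_form (w1, w2) (A + L) = A"
  proof (rule init_form_add_lower)
    show "A \<noteq> 0"
      using eval_s_linear_neq_0 [OF nz] by (simp add: A_def)
    show "weight_homogeneous (w1, w2) 0 A"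
      by (simp add: A_def weight_homogeneous_eval_s)
    show "\<forall>m\<in>Poly_Mapping.keys L. wweight (w1, w2) m < 0"
    proof (cases "\<kappa> = 0")
      case True
      then show ?thesis
        by (simp add: L_def wmult_def)
    next
      case False
      have "weight_homogeneous (w1, w2) (- real q * w2 + real p * w1) L"
        unfolding L_def using R_weight
        by (intro weight_homogeneous_wmult weight_homogeneous_single) (auto simp: weight_homogeneous_def)
      moreover have "0 < \<kappa>"
        using le False by (simp add: \<kappa>_def)
      ultimately show ?thesis
        by (auto simp: weight_homogeneous_def \<kappa>_def)
    qed
  qed
  ultimately show ?thesis
    unfolding A_def by blast
qed

lemma is_b_function_f_pq_power:
  fixes w1 w2 :: real
  assumes p: "0 < p" and le: "real p * w1 \<le> real q * w2" and nz: "(w1, w2) \<noteq> (0, 0)"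
  shows "is_b_function (Ann (f_pq p q ^ l)) (w1, w2) [:- of_real (real p * real l * w1), 1:]"
proof -
  have lowest: "real p * real l * w1 \<le> wdeg (w1, w2) ij" if ij: "ij \<in> Poly_Mapping.keys (f_pq p q ^ l)" for ij
  proof -
    obtain m where "m \<le> l" "ij = (p * m, q * (l - m))"
      using keys_f_pq_power [OF ij] .
    then have "wdeg (w1, w2) ij - real p * real l * w1 = real (l - m) * (real q * w2 - real p * w1)"
      by (simp add: of_nat_diff algebra_simps)
    moreover have "0 \<le> real (l - m) * (real q * w2 - real p * w1)"
      using le by simp
    ultimately show ?thesis
      by linarith
  qed
  obtain P where "P \<in> Ann (f_pq p q ^ l)"
    and "init_form (w1, w2) P = eval_s (w1, w2) [:- of_real (real p * real l * w1), 1:]"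
    using exists_Ann_f_pq_power_with_init_form [OF assms] by blast
  with lowest x_power_in_keys_f_pq_power [OF p] show ?thesis
    by (intro is_b_function_linearI [where t = "(p * l, 0)"]) auto
qed

theorem mainTheorem15:
  fixes p q l :: nat and \<omega>1 \<omega>2 :: real
  assumes "0 < p" and "p \<le> q" and "(\<omega>1, \<omega>2) \<noteq> (0, 0)"
  shows "is_b_function (Ann (f_pq p q ^ l)) (\<omega>1, \<omega>2)
           (if real p * \<omega>1 \<le> real q * \<omega>2
            then [: - complex_of_real (real p * real l * \<omega>1), 1 :]
            else [: - complex_of_real (real q * real l * \<omega>2), 1 :])"
proof (cases "real p * \<omega>1 \<le> real q * \<omega>2")
  case True
  with is_b_function_f_pq_power [OF \<open>0 < p\<close> True assms(3)] show ?thesis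
    by simp
next
  case False
  have "0 < q"
    using assms(1,2) by simp
  moreover have "real q * \<omega>2 \<le> real p * \<omega>1"
    using False by simp
  moreover have "(\<omega>2, \<omega>1) \<noteq> (0, 0)"
    using assms(3) by auto
  ultimately have "is_b_function (Ann (f_pq q p ^ l)) (\<omega>2, \<omega>1) [:- of_real (real q * real l * \<omega>2), 1:]"
    by (rule is_b_function_f_pq_power)
  from is_b_function_swap [OF this] False show ?thesis
    by (simp add: cpoly_swap_f_pq_power)
qed

end
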